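(* Let $J=\{m_1,\dots,m_d\}\subset\mathbb{Z}_n$ be a $d$-element subset that generates $\mathbb{Z}_n$ and is exceptional. Then there exist $n$-th roots of unity $z_{d+1},\dots,z_{2d}$ such that $$z=(\omega^{m_1},\dots,\omega^{m_d},z_{d+1},\dots,z_{2d})\in V$$ and $z$ is an exceptional point, i.e. $(z_{d+1},\dots,z_{2d})$ is not a permutation of $(\omega^{m_1},\dots,\omega^{m_d})$.
   Context: Let $\omega=e^{2\pi i/n}$. For a $d$-element subset $J\subset\mathbb{Z}_n$, the cyclic harmonic frame $\Phi_J$ is the sequence $(v_k)_{k\in\mathbb{Z}_n}$ with $v_k=(\omega^{jk})_{j\in J}\in\mathbb{C}^J\cong\mathbb{C}^d$. Two finite sequences $(v_k)_{k\in I}$, $(w_k)_{k\in I'}$ in $\mathbb{C}^d$ are unitarily equivalent if there is a unitary $U$ and a bijection $\sigma:I\to I'$ with $v_k=Uw_{\sigma(k)}$ for all $k$. Two $d$-element subsets $J,K\subset\mathbb{Z}_n$ are multiplicatively equivalent if $K=aJ=\{aj:j\in J\}$ for some unit $a\in\mathbb{Z}_n^*$. A $d$-element subset $J\subset\mathbb{Z}_n$ is exceptional if there is a $d$-element subset $K\subset\mathbb{Z}_n$, not multiplicatively equivalent to $J$, such that $\Phi_J$ and $\Phi_K$ are unitarily equivalent. Let $V=\{z\in\mathbb{C}^{2d}:\sum_{j=1}^d z_j-\sum_{j=d+1}^{2d}z_j=0\}$. A point $z\in V$ whose coordinates are roots of unity is called exceptional if $(z_{d+1},\dots,z_{2d})$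 is not a permutation of $(z_1,\dots,z_d)$. *)

theory Defs
  imports Complex_Main "HOL-Combinatorics.Permutations"
begin

text \<open>Z_n is represented by the residues {..<n} (as naturals); n > 0 throughout.\<close>

definition omega :: "nat \<Rightarrow> complex" where
  "omega n = cis (2 * pi / real n)"

text \<open>Vectors in C^J are functions nat => complex vanishing outside J.\<close>
definition vecs :: "nat set \<Rightarrow> (nat \<Rightarrow> complex) set" where
  "vecs A = {f. \<forall>j. j \<notin> A \<longrightarrow> f j = 0}"

definition cinner :: "nat set \<Rightarrow> (nat \<Rightarrow> complex) \<Rightarrow> (nat \<Rightarrow> complex) \<Rightarrow> complex" where
  "cinner A f g = (\<Sum>j\<in>A. f j * cnj (g j))"

definition frame_vec :: "nat \<Rightarrow> nat set \<Rightarrow> nat \<Rightarrow> (nat \<Rightarrow> complex)" where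
  "frame_vec n J k = (\<lambda>j. if j \<in> J then omega n ^ (j * k) else 0)"

definition unitary_between :: "nat set \<Rightarrow> nat set \<Rightarrow> ((nat \<Rightarrow> complex) \<Rightarrow> (nat \<Rightarrow> complex)) \<Rightarrow> bool" where
  "unitary_between K J U \<longleftrightarrow>
     bij_betw U (vecs K) (vecs J) \<and>
     (\<forall>f\<in>vecs K. \<forall>g\<in>vecs K. \<forall>a b. U (\<lambda>j. a * f j + b * g j) = (\<lambda>j. a * U f j + b * U g j)) \<and>
     (\<forall>f\<in>vecs K. \<forall>g\<in>vecs K. cinner J (U f) (U g) = cinner K f g)"

definition frames_unit_equiv :: "nat \<Rightarrow> nat set \<Rightarrow> nat set \<Rightarrow> bool" where
  "frames_unit_equiv n J K \<longleftrightarrow>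
     (\<exists>U \<sigma>. unitary_between K J U \<and> bij_betw \<sigma> {..<n} {..<n} \<and>
        (\<forall>k<n. frame_vec n J k = U (frame_vec n K (\<sigma> k))))"

definition mult_equiv :: "nat \<Rightarrow> nat set \<Rightarrow> nat set \<Rightarrow> bool" where
  "mult_equiv n J K \<longleftrightarrow> (\<exists>a<n. coprime a n \<and> K = (\<lambda>j. (a * j) mod n) ` J)"

definition exceptional_set :: "nat \<Rightarrow> nat \<Rightarrow> nat set \<Rightarrow> bool" where
  "exceptional_set n d J \<longleftrightarrow> J \<subseteq> {..<n} \<and> card J = d \<and>
     (\<exists>K. K \<subseteq> {..<n} \<and> card K = d \<and> \<not> mult_equiv n J K \<and> frames_unit_equiv n J K)"

definition generates_Zn :: "nat \<Rightarrow> nat set \<Rightarrow> bool" where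
  "generates_Zn n J \<longleftrightarrow> (\<forall>x<n. \<exists>c::nat \<Rightarrow> nat. (\<Sum>j\<in>J. c j * j) mod n = x)"

text \<open>Points of C^{2d} are functions nat => complex, coordinates z_1..z_{2d} being z 0 .. z (2d-1).\<close>
definition in_V :: "nat \<Rightarrow> (nat \<Rightarrow> complex) \<Rightarrow> bool" where
  "in_V d z \<longleftrightarrow> (\<Sum>i<d. z i) - (\<Sum>i\<in>{d..<2*d}. z i) = 0"

definition exceptional_point :: "nat \<Rightarrow> (nat \<Rightarrow> complex) \<Rightarrow> bool" where
  "exceptional_point d z \<longleftrightarrow> in_V d z \<and>
     (\<forall>i<2*d. \<exists>m>0. z i ^ m = 1) \<and>
     \<not> (\<exists>\<pi>. \<pi> permutes {..<d} \<and> (\<forall>i<d. z (d + i) = z (\<pi> i)))"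

end

theory Submission
  imports Defs "HOL-Number_Theory.Cong"
begin

text \<open>
  A unitary equivalence of frames preserves inner products up to the reindexing \<open>\<sigma>\<close> of the
  frame vectors. Comparing \<open>\<langle>v_1, v_0\<rangle>\<close> on both sides gives
  \<open>\<Sum>j\<in>J. \<omega>^j = \<Sum>k\<in>K. \<omega>^(c k)\<close> with \<open>c = \<sigma>(1) - \<sigma>(0)\<close>, so listing \<open>K\<close> as
  \<open>k_1, \<dots>, k_d\<close>, the point \<open>(\<omega>^m_1, \<dots>, \<omega>^m_d, \<omega>^(c k_1), \<dots>, \<omega>^(c k_d))\<close> lies in \<open>V\<close>.
  If its second half were a permutation of the first, then \<open>J = cK\<close> in \<open>\<int>_n\<close>; as \<open>J\<close>
  generates \<open>\<int>_n\<close>, \<open>c\<close> would be a unit, and \<open>K = c^-1 J\<close> would make \<open>J\<close> and \<open>K\<close>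
  multiplicatively equivalent.
\<close>

lemma omega_pow_eq_cis: "omega n ^ k = cis (2 * pi * real k / real n)"
  by (simp add: omega_def DeMoivre mult_ac)

lemma omega_pow_self:
  assumes "n > 0" shows "omega n ^ n = 1"
  using assms by (simp add: omega_pow_eq_cis)

lemma omega_pow_mod:
  assumes "n > 0" shows "omega n ^ (a mod n) = omega n ^ a"
proof -
  have "omega n ^ a = omega n ^ (n * (a div n) + a mod n)"
    by simp
  also have "\<dots> = (omega n ^ n) ^ (a div n) * omega n ^ (a mod n)"
    by (simp only: power_add power_mult)
  finally show ?thesis
    using omega_pow_self[OF assms] by simp
qed

lemma omega_pow_eq_iff:
  assumes "n > 0" shows "omega n ^ a = omega n ^ b \<longleftrightarrow> a mod n = b mod n"
proof
  assume "omega n ^ a = omega n ^ b"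
  then have "cis (2 * pi * real (a mod n) / real n) = cis (2 * pi * real (b mod n) / real n)"
    using assms by (simp only: omega_pow_mod flip: omega_pow_eq_cis)
  moreover have "inj_on (\<lambda>k. cis (2 * pi * real k / real n)) {..<n}"
    using bij_betw_roots_unity[OF assms] by (rule bij_betw_imp_inj_on)
  ultimately show "a mod n = b mod n"
    using assms by (auto dest: inj_onD)
next
  assume "a mod n = b mod n"
  then show "omega n ^ a = omega n ^ b"
    using assms by (metis omega_pow_mod)
qed

lemma omega_pow_root_unity:
  assumes "n > 0" shows "(omega n ^ a) ^ n = 1"
proof -
  have "(omega n ^ a) ^ n = (omega n ^ n) ^ a"
    by (metis power_mult mult.commute)
  then show ?thesis
    using omega_pow_self[OF assms] by simp
qed

lemma cnj_omega_pow:
  assumes "n > 0" shows "cnj (omega n ^ a) = omega n ^ ((n - 1) * a)"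
proof -
  have "cnj (omega n) * omega n = 1"
    by (simp add: omega_def cis_cnj cis_mult)
  moreover have "omega n ^ (n - 1) * omega n = 1"
    using assms omega_pow_self[OF assms] by (metis Suc_diff_1 power_Suc2)
  ultimately have "cnj (omega n) = omega n ^ (n - 1)"
    by (metis mult_right_cancel mult_zero_right zero_neq_one)
  then show ?thesis
    by (simp add: power_mult)
qed

lemma cinner_frame_vec:
  assumes "n > 0"
  shows "cinner J (frame_vec n J k) (frame_vec n J l) = (\<Sum>j\<in>J. omega n ^ ((k + (n - 1) * l) * j))"
  unfolding cinner_def frame_vec_def
proof (intro sum.cong refl)
  fix j assume "j \<in> J"
  have "omega n ^ (j * k) * cnj (omega n ^ (j * l)) = omega n ^ (j * k + (n - 1) * (j * l))"
    by (simp only: cnj_omega_pow[OF assms] power_add)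
  also have "j * k + (n - 1) * (j * l) = (k + (n - 1) * l) * j"
    by (simp add: algebra_simps)
  finally show "(if j \<in> J then omega n ^ (j * k) else 0) * cnj (if j \<in> J then omega n ^ (j * l) else 0)
      = omega n ^ ((k + (n - 1) * l) * j)"
    using \<open>j \<in> J\<close> by (simp only: if_True)
qed

lemma frame_vec_in_vecs: "frame_vec n J k \<in> vecs J"
  by (simp add: frame_vec_def vecs_def)

lemma frames_unit_equiv_cinner:
  assumes "frames_unit_equiv n J K"
  obtains \<sigma> where "\<And>k l. k < n \<Longrightarrow> l < n \<Longrightarrow>
    cinner J (frame_vec n J k) (frame_vec n J l) = cinner K (frame_vec n K (\<sigma> k)) (frame_vec n K (\<sigma> l))"
proof -
  obtain U \<sigma> where "unitary_between K J U" and "\<forall>k<n. frame_vec n J k = U (frame_vec n K (\<sigma> k))"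
    using assms unfolding frames_unit_equiv_def by blast
  then show thesis
    using that frame_vec_in_vecs unfolding unitary_between_def by metis
qed

lemma frames_unit_equiv_root_sums:
  assumes "n > 0" and "frames_unit_equiv n J K"
  obtains c where "(\<Sum>j\<in>J. omega n ^ j) = (\<Sum>k\<in>K. omega n ^ (c * k))"
proof -
  obtain \<sigma> where \<sigma>: "\<And>k l. k < n \<Longrightarrow> l < n \<Longrightarrow>
    cinner J (frame_vec n J k) (frame_vec n J l) = cinner K (frame_vec n K (\<sigma> k)) (frame_vec n K (\<sigma> l))"
    using frames_unit_equiv_cinner[OF assms(2)] by blast
  \<comment> \<open>The index \<open>1 mod n\<close> rather than \<open>1\<close> keeps it in \<open>{..<n}\<close> when \<open>n = 1\<close>.\<close>
  have "(\<Sum>j\<in>J. omega n ^ j) = (\<Sum>j\<in>J. omega n ^ ((1 mod n + (n - 1) * 0) * j))"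
  proof (intro sum.cong refl)
    fix j
    have "((1 mod n) * j) mod n = j mod n"
      by (metis mod_mult_left_eq mult_1)
    then show "omega n ^ j = omega n ^ ((1 mod n + (n - 1) * 0) * j)"
      using omega_pow_mod[OF assms(1)] by (metis add_0_right mult_0_right)
  qed
  also have "\<dots> = cinner J (frame_vec n J (1 mod n)) (frame_vec n J 0)"
    using assms(1) by (simp only: cinner_frame_vec)
  also have "\<dots> = cinner K (frame_vec n K (\<sigma> (1 mod n))) (frame_vec n K (\<sigma> 0))"
    using assms(1) by (intro \<sigma>) simp_all
  also have "\<dots> = (\<Sum>k\<in>K. omega n ^ ((\<sigma> (1 mod n) + (n - 1) * \<sigma> 0) * k))"
    using assms(1) by (simp only: cinner_frame_vec)
  finally show thesis
    by (rule that)
qed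

lemma coprime_if_generates_Zn_multiples:
  assumes "generates_Zn n J" and "n > 0" and "\<forall>j\<in>J. \<exists>k. j = (c * k) mod n"
  shows "coprime c n"
proof -
  obtain g where g: "\<And>j. j \<in> J \<Longrightarrow> j = (c * g j) mod n"
    using assms(3) by metis
  obtain w where "(\<Sum>j\<in>J. w j * j) mod n = 1 mod n"
    using assms(1,2) unfolding generates_Zn_def by (meson mod_less_divisor)
  then have "[1 = (\<Sum>j\<in>J. w j * j)] (mod n)"
    by (simp add: cong_def)
  also have "[(\<Sum>j\<in>J. w j * j) = (\<Sum>j\<in>J. w j * (c * g j))] (mod n)"
    by (intro cong_sum cong_mult cong_refl) (metis g cong_def mod_mod_trivial)
  also have "(\<Sum>j\<in>J. w j * (c * g j)) = c * (\<Sum>j\<in>J. w j * g j)"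
    by (simp add: sum_distrib_left algebra_simps)
  finally show ?thesis
    unfolding coprime_iff_invertible_nat by (metis One_nat_def cong_sym)
qed

lemma mult_equiv_if_image_mult:
  assumes "generates_Zn n J" and "n > 0" and "K \<subseteq> {..<n}"
    and "J = (\<lambda>k. (c * k) mod n) ` K"
  shows "mult_equiv n J K"
proof -
  have "coprime c n"
    using assms by (intro coprime_if_generates_Zn_multiples) auto
  then obtain a where "a < n" and ca: "[c * a = Suc 0] (mod n)"
    using assms(2) coprime_iff_invertible'_nat by blast
  then have "coprime a n"
    unfolding coprime_iff_invertible_nat by (metis mult.commute)
  have "(a * ((c * k) mod n)) mod n = k" if "k \<in> K" for k
  proof -
    have "[a * ((c * k) mod n) = (c * a) * k] (mod n)"
      by (simp add: cong_def mod_mult_right_eq algebra_simps)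
    also have "[(c * a) * k = Suc 0 * k] (mod n)"
      using ca by (rule cong_scalar_right)
    finally show ?thesis
      using that assms(3) by (auto simp: cong_def)
  qed
  then have "K = (\<lambda>j. (a * j) mod n) ` J"
    unfolding assms(4) image_image by (simp add: image_cong)
  with \<open>a < n\<close> \<open>coprime a n\<close> show ?thesis
    unfolding mult_equiv_def by blast
qed

lemma image_mult_if_permuted_roots:
  assumes "n > 0" and "bij_betw m {..<d} J" and "J \<subseteq> {..<n}" and "bij_betw k {..<d} K"
    and "\<pi> permutes {..<d}" and "\<forall>i<d. omega n ^ (c * k i) = omega n ^ m (\<pi> i)"
  shows "J = (\<lambda>x. (c * x) mod n) ` K"
proof -
  have "(c * k i) mod n = m (\<pi> i)" if "i < d" for i
  proof -
    have "\<pi> i < d"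
      using assms(5) that by (metis lessThan_iff permutes_in_image)
    then have "m (\<pi> i) < n"
      using assms(2,3) by (auto simp: bij_betw_def)
    then show ?thesis
      using assms(6) that omega_pow_eq_iff[OF assms(1)] by simp
  qed
  then have "(\<lambda>i. (c * k i) mod n) ` {..<d} = m ` \<pi> ` {..<d}"
    by (simp add: image_image)
  also have "\<dots> = J"
    using assms(2,5) by (simp add: bij_betw_def permutes_image)
  moreover have "K = k ` {..<d}"
    using assms(4) by (simp add: bij_betw_def)
  ultimately show ?thesis
    by (simp add: image_image)
qed

lemma in_V_iff_sum_halves: "in_V d z \<longleftrightarrow> (\<Sum>i<d. z i) = (\<Sum>i<d. z (d + i))"
proof -
  have "(\<Sum>i\<in>{d..<2*d}. z i) = (\<Sum>i<d. z (d + i))"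
    using sum.shift_bounds_nat_ivl[of z 0 d d] by (simp add: lessThan_atLeast0 mult_2 add.commute)
  then show ?thesis
    by (simp add: in_V_def)
qed

theorem lemma4p2:
  fixes n d :: nat and J :: "nat set" and m :: "nat \<Rightarrow> nat"
  assumes "n > 0"
    and "exceptional_set n d J"
    and "generates_Zn n J"
    and "bij_betw m {..<d} J"
  shows "\<exists>z :: nat \<Rightarrow> complex.
           (\<forall>i<d. z i = omega n ^ m i) \<and>
           (\<forall>i<d. z (d + i) ^ n = 1) \<and>
           in_V d z \<and> exceptional_point d z"
proof -
  obtain K where "J \<subseteq> {..<n}" "K \<subseteq> {..<n}" "card K = d"
    and not_mult_equiv: "\<not> mult_equiv n J K" and "frames_unit_equiv n J K"
    using assms(2) unfolding exceptional_set_def by blast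
  obtain c where sums: "(\<Sum>j\<in>J. omega n ^ j) = (\<Sum>k\<in>K. omega n ^ (c * k))"
    using frames_unit_equiv_root_sums[OF assms(1) \<open>frames_unit_equiv n J K\<close>] .
  obtain k where k: "bij_betw k {..<d} K"
    using ex_bij_betw_nat_finite[of K] \<open>K \<subseteq> {..<n}\<close> \<open>card K = d\<close>
    by (metis finite_lessThan finite_subset lessThan_atLeast0)
  define z where "z i = (if i < d then omega n ^ m i else omega n ^ (c * k (i - d)))" for i
  have "in_V d z"
    using sums sum.reindex_bij_betw[OF assms(4), of "power (omega n)"]
      sum.reindex_bij_betw[OF k, of "\<lambda>x. omega n ^ (c * x)"]
    by (simp add: in_V_iff_sum_halves z_def)
  moreover have "\<not> (\<exists>\<pi>. \<pi> permutes {..<d} \<and> (\<forall>i<d. z (d + i) = z (\<pi> i)))"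
  proof
    assume "\<exists>\<pi>. \<pi> permutes {..<d} \<and> (\<forall>i<d. z (d + i) = z (\<pi> i))"
    then obtain \<pi> where \<pi>: "\<pi> permutes {..<d}" and z_perm: "\<forall>i<d. z (d + i) = z (\<pi> i)"
      by blast
    have "\<pi> i < d \<longleftrightarrow> i < d" for i
      using \<pi> by (metis lessThan_iff permutes_in_image)
    then have "\<forall>i<d. omega n ^ (c * k i) = omega n ^ m (\<pi> i)"
      using z_perm by (simp add: z_def)
    then have "mult_equiv n J K"
      using image_mult_if_permuted_roots[OF assms(1,4) \<open>J \<subseteq> {..<n}\<close> k \<pi>]
        mult_equiv_if_image_mult[OF assms(3,1) \<open>K \<subseteq> {..<n}\<close>] by blast
    with not_mult_equiv show False ..
  qed
  moreover have "\<forall>i. z i ^ n = 1"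
    using assms(1) by (simp add: z_def omega_pow_root_unity)
  moreover have "\<forall>i<d. z i = omega n ^ m i"
    by (simp add: z_def)
  ultimately show ?thesis
    unfolding exceptional_point_def using assms(1) by blast
qed

end
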